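(* With $\overline{C}(\alpha)$ as defined in the context, $\overline{C}(1)=\dfrac{\pi^2}{3}$.
   Context: For a strictly increasing sequence $(\lambda_k)_{k=-\infty}^{\infty}$ of real numbers, put $\delta_k:=\min\{\lambda_k-\lambda_{k-1},\lambda_{k+1}-\lambda_k\}$. For $0\le\alpha\le2$, let $\overline{C}(\alpha)$ be the minimum of all constants $C(\alpha)$ such that $$\sum_{m=1}^N\sum_{\substack{n=1\\ n\ne m}}^N\frac{\delta_m^{2-\alpha}\delta_n^{\alpha}t_mt_n}{(\lambda_m-\lambda_n)^2}\le C(\alpha)\sum_{n=1}^N t_n^2$$ holds for every positive integer $N$, every strictly increasing real sequence $(\lambda_k)_{k\in\mathbb Z}$ and all nonnegative reals $t_1,\dots,t_N$; set $\overline{C}(\alpha)=\infty$ if no such real constant exists. *)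

theory Defs
  imports "HOL-Analysis.Analysis"
begin

definition gap :: "(int \<Rightarrow> real) \<Rightarrow> int \<Rightarrow> real" where
  "gap lam k = min (lam k - lam (k - 1)) (lam (k + 1) - lam k)"

definition admissible_const :: "real \<Rightarrow> real \<Rightarrow> bool" where
  "admissible_const \<alpha> C \<longleftrightarrow>
     (\<forall>(N::nat) (lam::int \<Rightarrow> real) (t::nat \<Rightarrow> real).
        N \<ge> 1 \<longrightarrow> strict_mono lam \<longrightarrow> (\<forall>n\<in>{1..N}. 0 \<le> t n) \<longrightarrow>
        (\<Sum>m\<in>{1..N}. \<Sum>n\<in>{1..N} - {m}.
            gap lam (int m) powr (2 - \<alpha>) * gap lam (int n) powr \<alpha> * t m * t n
            / (lam (int m) - lam (int n))^2)
        \<le> C * (\<Sum>n\<in>{1..N}. (t n)^2))"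

text \<open>Infimum over all admissible real constants, in the extended reals;
  equals infinity when no real constant works (Inf of the empty set).\<close>
definition Cbar :: "real \<Rightarrow> ereal" where
  "Cbar \<alpha> = Inf (ereal ` {C. admissible_const \<alpha> C})"

end

theory Submission
  imports Defs "HOL-Probability.Distributions"
begin

(* Upper bound: by the Schur test for the symmetric kernel delta_m delta_n / (lambda_m - lambda_n)^2
   it suffices to bound every one-sided row sum delta_0 * sum_{k>=1} delta_k / a_k^2 by pi^2/6,
   where a_k = lambda_k - lambda_0 satisfies a_(k+1) >= a_k + max delta_k delta_(k+1).
   Put S(u,h) = sum_j h / (u + j h)^2. Then S(u,h) = h/u^2 + S(u+h,h), S(h,h) = pi^2/(6h),
   S decreases in u and, by the Laplace representation
   S(u,h) = int_0^oo h x exp(-u x) / (1 - exp(-h x)) dx and the convexity of exp,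
   S(u,h) increases in h while S(u+h,h) decreases in h. Together these show that
   sum_{k=1..M} delta_k / a_k^2 + S(a_M + delta_M, delta_M) does not increase with M,
   and for M = 0 it equals S(delta_0, delta_0) = pi^2/(6 delta_0).
   Lower bound: for lambda_k = k and t = 1, each row far from the ends of {1..N} has sum
   close to 2 zeta(2) = pi^2/3. *)

lemma nn_integral_x_exp_neg:
  assumes "0 < t" "0 \<le> c"
  shows "(\<integral>\<^sup>+x. ennreal (c * x * exp (-(t * x))) * indicator {0..} x \<partial>lborel) = ennreal (c / t^2)"
proof -
  have "(\<integral>\<^sup>+x. ennreal (c * x * exp (-(t * x))) * indicator {0..} x \<partial>lborel)
      = (\<integral>\<^sup>+x. ennreal (c / t) * ennreal (erlang_density 0 t x * x ^ 1) \<partial>lborel)"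
    using assms by (intro nn_integral_cong)
      (auto simp: erlang_density_def ennreal_mult'[symmetric] split: split_indicator)
  also have "\<dots> = ennreal (c / t) * ennreal (1 / t)"
    using nn_integral_erlang_ith_moment[OF assms(1), of 0 1] by (subst nn_integral_cmult) auto
  also have "\<dots> = ennreal (c / t^2)"
    using assms by (simp add: ennreal_mult'[symmetric] power2_eq_square)
  finally show ?thesis .
qed

lemma exp_slope_mono:
  fixes a b :: real
  assumes "a \<le> b" "a \<noteq> 0" "b \<noteq> 0"
  shows "(exp a - 1) / a \<le> (exp b - 1) / b"
proof -
  have cvx: "convex_on UNIV exp"
    by (rule exp_convex)
  have flip: "(1 - exp x) / x = - ((exp x - 1) / x)" for x :: real
    by (simp add: minus_divide_left)
  consider "a = b" | "0 < a" "a < b" | "a < 0" "b < 0" "a < b" | "a < 0" "0 < b"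
    using assms by linarith
  then show ?thesis
  proof cases
    case 2
    with convex_on_slope_le(1)[OF cvx _ _ 2(1) 2(2)] show ?thesis by (simp add: flip)
  next
    case 3
    with convex_on_slope_le(2)[OF cvx _ _ 3(3) 3(2)] show ?thesis by simp
  next
    case 4
    with convex_on_slope_le[OF cvx _ _ 4(1) 4(2)] show ?thesis by (simp add: flip)
  qed simp
qed

lemma exp_slope_pos:
  fixes y :: real
  assumes "y \<noteq> 0"
  shows "0 < (exp y - 1) / y"
  using assms by (cases "0 < y") (auto intro: divide_pos_pos divide_neg_neg)

(* Valued in ennreal, so that the exchange of sum and integral below needs no summability side conditions. *)
definition inv_sq_sum :: "real \<Rightarrow> real \<Rightarrow> ennreal" where
  "inv_sq_sum u h = (\<Sum>j. ennreal (h / (u + real j * h)^2))"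

definition inv_sq_sum_kernel :: "real \<Rightarrow> real \<Rightarrow> real \<Rightarrow> real" where
  "inv_sq_sum_kernel u h x = h * x * exp (-(u * x)) / (1 - exp (-(h * x)))"

lemma inv_sq_sum_kernel_eq:
  assumes "0 < h" "0 < x"
  shows "inv_sq_sum_kernel u h x = exp (-(u * x)) / ((exp (-(h * x)) - 1) / (-(h * x)))"
  using assms by (simp add: inv_sq_sum_kernel_def field_simps)

lemma inv_sq_sum_kernel_shift_eq:
  assumes "0 < h" "0 < x"
  shows "inv_sq_sum_kernel (u + h) h x = exp (-(u * x)) / ((exp (h * x) - 1) / (h * x))"
proof -
  have "exp (-((u + h) * x)) = exp (-(u * x)) * exp (-(h * x))"
    by (simp add: exp_add[symmetric] algebra_simps)
  moreover have "exp (-(h * x)) * exp (h * x) = 1"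
    by (simp add: exp_add[symmetric])
  ultimately show ?thesis
    using assms by (simp add: inv_sq_sum_kernel_def field_simps)
qed

lemma inv_sq_sum_kernel_mono:
  assumes "0 < h'" "h' \<le> h" "0 \<le> x"
  shows "inv_sq_sum_kernel u h' x \<le> inv_sq_sum_kernel u h x"
proof (cases "x = 0")
  case False
  with assms have "0 < x" by simp
  define s where "s g = (exp (-(g * x)) - 1) / (-(g * x))" for g
  have "s h \<le> s h'"
    unfolding s_def using assms \<open>0 < x\<close> by (intro exp_slope_mono) (auto intro: mult_right_mono)
  moreover have "0 < s g" if "0 < g" for g
    unfolding s_def using that \<open>0 < x\<close> by (intro exp_slope_pos) simp
  ultimately have "exp (-(u * x)) / s h' \<le> exp (-(u * x)) / s h"
    using assms by (intro divide_left_mono) auto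
  then show ?thesis
    using assms \<open>0 < x\<close> by (simp only: s_def inv_sq_sum_kernel_eq)
qed (simp add: inv_sq_sum_kernel_def)

lemma inv_sq_sum_kernel_shift_antimono:
  assumes "0 < h" "h \<le> h'" "0 \<le> x"
  shows "inv_sq_sum_kernel (u + h') h' x \<le> inv_sq_sum_kernel (u + h) h x"
proof (cases "x = 0")
  case False
  with assms have "0 < x" by simp
  define s where "s g = (exp (g * x) - 1) / (g * x)" for g
  have "s h \<le> s h'"
    unfolding s_def using assms \<open>0 < x\<close> by (intro exp_slope_mono) (auto intro: mult_right_mono)
  moreover have "0 < s g" if "0 < g" for g
    unfolding s_def using that \<open>0 < x\<close> by (intro exp_slope_pos) simp
  ultimately have "exp (-(u * x)) / s h' \<le> exp (-(u * x)) / s h"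
    using assms by (intro divide_left_mono) auto
  then show ?thesis
    using assms \<open>0 < x\<close> by (simp only: s_def inv_sq_sum_kernel_shift_eq)
qed (simp add: inv_sq_sum_kernel_def)

lemma suminf_inv_sq_sum_kernel:
  assumes "0 < h" "0 \<le> x"
  shows "(\<Sum>j. ennreal (h * x * exp (-((u + real j * h) * x)))) = ennreal (inv_sq_sum_kernel u h x)"
proof (cases "x = 0")
  case False
  with assms have "0 < x" by simp
  let ?q = "exp (-(h * x))"
  have "(\<lambda>j. ?q ^ j) sums (1 / (1 - ?q))"
    using geometric_sums[of ?q] assms \<open>0 < x\<close> by simp
  then have "(\<lambda>j. h * x * exp (-(u * x)) * ?q ^ j) sums (h * x * exp (-(u * x)) * (1 / (1 - ?q)))"
    by (rule sums_mult)
  moreover have "h * x * exp (-(u * x)) * ?q ^ j = h * x * exp (-((u + real j * h) * x))" for j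
    by (simp add: exp_of_nat_mult[symmetric] exp_add[symmetric] algebra_simps)
  ultimately have "(\<lambda>j. h * x * exp (-((u + real j * h) * x))) sums inv_sq_sum_kernel u h x"
    by (simp add: inv_sq_sum_kernel_def)
  then show ?thesis
    using assms by (intro suminf_ennreal_eq) auto
qed (simp add: inv_sq_sum_kernel_def)

lemma inv_sq_sum_eq_nn_integral:
  assumes "0 < u" "0 < h"
  shows "inv_sq_sum u h = (\<integral>\<^sup>+x. ennreal (inv_sq_sum_kernel u h x) * indicator {0..} x \<partial>lborel)"
proof -
  have "ennreal (h / (u + real j * h)^2)
      = (\<integral>\<^sup>+x. ennreal (h * x * exp (-((u + real j * h) * x))) * indicator {0..} x \<partial>lborel)" for j
    using assms by (intro nn_integral_x_exp_neg[symmetric]) (auto intro: add_pos_nonneg)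
  then have "inv_sq_sum u h
      = (\<Sum>j. \<integral>\<^sup>+x. ennreal (h * x * exp (-((u + real j * h) * x))) * indicator {0..} x \<partial>lborel)"
    unfolding inv_sq_sum_def by (simp only:)
  also have "\<dots> = (\<integral>\<^sup>+x. (\<Sum>j. ennreal (h * x * exp (-((u + real j * h) * x))) * indicator {0..} x) \<partial>lborel)"
    by (rule nn_integral_suminf[symmetric]) measurable
  also have "\<dots> = (\<integral>\<^sup>+x. ennreal (inv_sq_sum_kernel u h x) * indicator {0..} x \<partial>lborel)"
  proof (intro nn_integral_cong)
    fix x :: real
    show "(\<Sum>j. ennreal (h * x * exp (-((u + real j * h) * x))) * indicator {0..} x)
        = ennreal (inv_sq_sum_kernel u h x) * indicator {0..} x"
      using suminf_inv_sq_sum_kernel[OF \<open>0 < h\<close>, of x u] by (cases "0 \<le> x") simp_all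
  qed
  finally show ?thesis .
qed

lemma inv_sq_sum_mono:
  assumes "0 < u" "0 < h'" "h' \<le> h"
  shows "inv_sq_sum u h' \<le> inv_sq_sum u h"
proof -
  have "(\<integral>\<^sup>+x. ennreal (inv_sq_sum_kernel u h' x) * indicator {0..} x \<partial>lborel)
      \<le> (\<integral>\<^sup>+x. ennreal (inv_sq_sum_kernel u h x) * indicator {0..} x \<partial>lborel)"
    using assms
    by (intro nn_integral_mono) (auto intro!: ennreal_leI inv_sq_sum_kernel_mono split: split_indicator)
  then show ?thesis
    using assms by (simp only: inv_sq_sum_eq_nn_integral)
qed

lemma inv_sq_sum_shift_antimono:
  assumes "0 \<le> u" "0 < h" "h \<le> h'"
  shows "inv_sq_sum (u + h') h' \<le> inv_sq_sum (u + h) h"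
proof -
  have "(\<integral>\<^sup>+x. ennreal (inv_sq_sum_kernel (u + h') h' x) * indicator {0..} x \<partial>lborel)
      \<le> (\<integral>\<^sup>+x. ennreal (inv_sq_sum_kernel (u + h) h x) * indicator {0..} x \<partial>lborel)"
    using assms by (intro nn_integral_mono)
      (auto intro!: ennreal_leI inv_sq_sum_kernel_shift_antimono split: split_indicator)
  moreover have "0 < u + h" "0 < u + h'"
    using assms by linarith+
  ultimately show ?thesis
    using assms by (simp only: inv_sq_sum_eq_nn_integral)
qed

lemma inv_sq_sum_antimono:
  assumes "0 < u" "u \<le> u'" "0 < h"
  shows "inv_sq_sum u' h \<le> inv_sq_sum u h"
  unfolding inv_sq_sum_def
proof (intro suminf_le summableI allI ennreal_leI)
  fix j
  have "0 < u + real j * h"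
    using assms by (simp add: add_pos_nonneg)
  moreover have "u + real j * h \<le> u' + real j * h"
    using assms by simp
  ultimately show "h / (u' + real j * h)^2 \<le> h / (u + real j * h)^2"
    using assms by (intro divide_left_mono power_mono mult_pos_pos) auto
qed

lemma inv_sq_sum_unfold:
  assumes "0 < h"
  shows "inv_sq_sum u h = ennreal (h / u^2) + inv_sq_sum (u + h) h"
proof -
  have "inv_sq_sum u h = (\<Sum>j. ennreal (h / (u + real (j + 1) * h)^2)) + ennreal (h / u^2)"
    unfolding inv_sq_sum_def by (subst suminf_offset[where i = 1]) (auto intro: summableI)
  then show ?thesis
    by (simp add: inv_sq_sum_def algebra_simps)
qed

lemma inv_sq_sum_self:
  assumes "0 < h"
  shows "inv_sq_sum h h = ennreal (pi^2 / 6 / h)"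
proof -
  have "(\<lambda>j. 1 / h * (1 / (real j + 1)^2)) sums (1 / h * (pi^2 / 6))"
    using inverse_squares_sums by (intro sums_mult) (simp add: add.commute)
  moreover have "1 / h * (1 / (real j + 1)^2) = h / (h + real j * h)^2" for j
  proof -
    have "h + real j * h = h * (real j + 1)"
      by (simp add: algebra_simps)
    then show ?thesis
      using assms by (simp add: power_mult_distrib power2_eq_square)
  qed
  ultimately show ?thesis
    unfolding inv_sq_sum_def using assms by (intro suminf_ennreal_eq) (auto simp: mult.commute)
qed

lemma inv_sq_sum_step:
  assumes "0 \<le> x" "0 < e" "0 < e'" "x + max e e' \<le> x'"
  shows "ennreal (e' / x'^2) + inv_sq_sum (x' + e') e' \<le> inv_sq_sum (x + e) e"
proof -
  define y where "y = x + max e e'"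
  have "0 < y" "y \<le> x'"
    using assms by (auto simp: y_def max_def)
  have "e' / x'^2 \<le> e' / y^2"
    using \<open>0 < y\<close> \<open>y \<le> x'\<close> assms(3) by (intro divide_left_mono power_mono mult_pos_pos) auto
  moreover have "inv_sq_sum (x' + e') e' \<le> inv_sq_sum (y + e') e'"
    using \<open>0 < y\<close> \<open>y \<le> x'\<close> assms(3) by (intro inv_sq_sum_antimono) auto
  ultimately have "ennreal (e' / x'^2) + inv_sq_sum (x' + e') e' \<le> ennreal (e' / y^2) + inv_sq_sum (y + e') e'"
    by (intro add_mono ennreal_leI)
  also have "\<dots> = inv_sq_sum y e'"
    using assms(3) by (rule inv_sq_sum_unfold[symmetric])
  also have "\<dots> \<le> inv_sq_sum (x + e) e"
  proof (cases "e' \<le> e")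
    case True
    then show ?thesis
      using assms inv_sq_sum_mono[of "x + e" e' e] by (simp add: y_def)
  next
    case False
    then show ?thesis
      using assms inv_sq_sum_shift_antimono[of x e e'] by (simp add: y_def)
  qed
  finally show ?thesis .
qed

lemma inv_sq_sum_telescope:
  fixes a d :: "nat \<Rightarrow> real"
  assumes "a 0 = 0" "\<And>k. 0 < d k" "\<And>k. a k + max (d k) (d (Suc k)) \<le> a (Suc k)"
  shows "(\<Sum>k=1..M. ennreal (d k / (a k)^2)) + inv_sq_sum (a M + d M) (d M) \<le> inv_sq_sum (d 0) (d 0)"
proof -
  have a_nonneg: "0 \<le> a k" for k
  proof (induction k)
    case (Suc k)
    then show ?case
      using assms(2,3)[of k] max.cobounded1[of "d k" "d (Suc k)"] by linarith
  qed (simp add: assms(1))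
  show ?thesis
  proof (induction M)
    case (Suc M)
    have step: "ennreal (d (Suc M) / (a (Suc M))^2) + inv_sq_sum (a (Suc M) + d (Suc M)) (d (Suc M))
        \<le> inv_sq_sum (a M + d M) (d M)"
      using assms a_nonneg by (intro inv_sq_sum_step) auto
    have "(\<Sum>k=1..Suc M. ennreal (d k / (a k)^2)) + inv_sq_sum (a (Suc M) + d (Suc M)) (d (Suc M))
        = (\<Sum>k=1..M. ennreal (d k / (a k)^2))
          + (ennreal (d (Suc M) / (a (Suc M))^2) + inv_sq_sum (a (Suc M) + d (Suc M)) (d (Suc M)))"
      by (simp add: add.assoc)
    also have "\<dots> \<le> (\<Sum>k=1..M. ennreal (d k / (a k)^2)) + inv_sq_sum (a M + d M) (d M)"
      using step by (rule add_left_mono)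
    also have "\<dots> \<le> inv_sq_sum (d 0) (d 0)"
      by (rule Suc.IH)
    finally show ?case .
  qed (simp add: assms(1))
qed

lemma gap_weighted_inv_sq_sum_le:
  fixes a d :: "nat \<Rightarrow> real"
  assumes "a 0 = 0" "\<And>k. 0 < d k" "\<And>k. a k + max (d k) (d (Suc k)) \<le> a (Suc k)"
  shows "(\<Sum>k=1..M. d 0 * d k / (a k)^2) \<le> pi^2 / 6"
proof -
  have "0 \<le> d k / (a k)^2" for k
    using assms(2)[of k] by simp
  then have "ennreal (\<Sum>k=1..M. d k / (a k)^2) = (\<Sum>k=1..M. ennreal (d k / (a k)^2))"
    by (intro sum_ennreal[symmetric])
  also have "\<dots> \<le> (\<Sum>k=1..M. ennreal (d k / (a k)^2)) + inv_sq_sum (a M + d M) (d M)"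
    by (rule add_increasing2) simp_all
  also have "\<dots> \<le> inv_sq_sum (d 0) (d 0)"
    using assms by (rule inv_sq_sum_telescope[where a = a and d = d])
  also have "\<dots> = ennreal (pi^2 / 6 / d 0)"
    using assms(2) by (rule inv_sq_sum_self)
  finally have "(\<Sum>k=1..M. d k / (a k)^2) \<le> pi^2 / 6 / d 0"
    using assms(2)[of 0] by (subst (asm) ennreal_le_iff) auto
  then have "d 0 * (\<Sum>k=1..M. d k / (a k)^2) \<le> pi^2 / 6"
    using assms(2)[of 0] by (simp add: pos_le_divide_eq mult.commute)
  then show ?thesis
    by (simp add: sum_distrib_left)
qed

lemma gap_pos: "strict_mono lam \<Longrightarrow> 0 < gap lam k"
  unfolding gap_def by (auto simp: strict_mono_def)

lemma gap_reflect: "gap (\<lambda>k. - lam (- k)) k = gap lam (- k)"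
proof -
  have "- k - 1 = - (k + 1)" "- k + 1 = - (k - 1)"
    by simp_all
  then show ?thesis
    unfolding gap_def by (simp add: min.commute)
qed

lemma gap_weighted_right_sum_le:
  assumes "strict_mono (lam :: int \<Rightarrow> real)"
  shows "(\<Sum>k=1..M. gap lam m * gap lam (m + int k) / (lam (m + int k) - lam m)^2) \<le> pi^2 / 6"
proof -
  have "lam j - lam m + max (gap lam j) (gap lam (j + 1)) \<le> lam (j + 1) - lam m" for j
    unfolding gap_def by (auto simp: max_def min_def)
  moreover have "m + int (Suc k) = m + int k + 1" for k
    by simp
  ultimately have "lam (m + int k) - lam m + max (gap lam (m + int k)) (gap lam (m + int (Suc k)))
      \<le> lam (m + int (Suc k)) - lam m" for k
    by (simp only:)
  then show ?thesis
    using gap_weighted_inv_sq_sum_le[where a = "\<lambda>k. lam (m + int k) - lam m"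
        and d = "\<lambda>k. gap lam (m + int k)"] gap_pos[OF assms]
    by simp
qed

lemma gap_weighted_left_sum_le:
  assumes "strict_mono (lam :: int \<Rightarrow> real)"
  shows "(\<Sum>k=1..M. gap lam m * gap lam (m - int k) / (lam m - lam (m - int k))^2) \<le> pi^2 / 6"
proof -
  have "strict_mono (\<lambda>k. - lam (- k))"
    using assms by (simp add: strict_mono_def)
  from gap_weighted_right_sum_le[OF this, where m = "- m"]
  show ?thesis
    by (simp add: gap_reflect algebra_simps)
qed

lemma sum_offdiag_swap:
  assumes "finite A"
  shows "(\<Sum>m\<in>A. \<Sum>n\<in>A - {m}. f m n) = (\<Sum>n\<in>A. \<Sum>m\<in>A - {n}. f m n)"
proof -
  have "A - {m} = {n. n \<in> A \<and> m \<noteq> n}" "A - {m} = {n. n \<in> A \<and> n \<noteq> m}" for m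
    by auto
  then show ?thesis
    using sum.swap_restrict[OF assms assms, of f "\<lambda>m n. m \<noteq> n"] by simp
qed

lemma schur_test_offdiag:
  fixes K :: "'a \<Rightarrow> 'a \<Rightarrow> real"
  assumes "finite A" "\<And>m n. K m n = K n m" "\<And>m n. 0 \<le> K m n"
    and "\<And>m. m \<in> A \<Longrightarrow> (\<Sum>n\<in>A - {m}. K m n) \<le> C"
  shows "(\<Sum>m\<in>A. \<Sum>n\<in>A - {m}. K m n * t m * t n) \<le> C * (\<Sum>n\<in>A. (t n)^2)"
proof -
  have "K m n * t m * t n \<le> K m n * (t m)^2 / 2 + K m n * (t n)^2 / 2" for m n
  proof -
    have "2 * (t m * t n) \<le> (t m)^2 + (t n)^2"
      using sum_squares_bound[of "t m" "t n"] by simp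
    then have "K m n * (2 * (t m * t n)) \<le> K m n * ((t m)^2 + (t n)^2)"
      using assms(3) by (rule mult_left_mono)
    then show ?thesis
      by (simp add: algebra_simps)
  qed
  then have "(\<Sum>m\<in>A. \<Sum>n\<in>A - {m}. K m n * t m * t n)
      \<le> (\<Sum>m\<in>A. \<Sum>n\<in>A - {m}. K m n * (t m)^2 / 2 + K m n * (t n)^2 / 2)"
    by (intro sum_mono)
  also have "\<dots> = (\<Sum>m\<in>A. \<Sum>n\<in>A - {m}. K m n * (t m)^2) / 2
      + (\<Sum>m\<in>A. \<Sum>n\<in>A - {m}. K m n * (t n)^2) / 2"
    by (simp add: sum.distrib sum_divide_distrib)
  also have "(\<Sum>m\<in>A. \<Sum>n\<in>A - {m}. K m n * (t n)^2) = (\<Sum>m\<in>A. \<Sum>n\<in>A - {m}. K m n * (t m)^2)"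
    using assms(1,2) by (subst sum_offdiag_swap) simp_all
  also have "(\<Sum>m\<in>A. \<Sum>n\<in>A - {m}. K m n * (t m)^2) \<le> (\<Sum>m\<in>A. C * (t m)^2)"
    using assms(4) by (intro sum_mono) (simp add: sum_distrib_right[symmetric] mult_right_mono)
  finally show ?thesis
    by (simp add: sum_distrib_left)
qed

lemma gap_weighted_row_sum_le:
  fixes lam :: "int \<Rightarrow> real" and A :: "nat set"
  assumes "strict_mono lam" "finite A"
  shows "(\<Sum>n\<in>A - {m}. gap lam (int m) * gap lam (int n) / (lam (int m) - lam (int n))^2) \<le> pi^2 / 3"
proof -
  define f where "f n = gap lam (int m) * gap lam (int n) / (lam (int m) - lam (int n))^2" for n
  obtain M where "A \<subseteq> {..M}"
    using assms(2) finite_nat_iff_bounded_le by blast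
  then have "A - {m} \<subseteq> {..<m} \<union> {m<..M}"
    by auto
  moreover have "0 \<le> f n" for n
    using gap_pos[OF assms(1)] by (simp add: f_def less_imp_le)
  ultimately have "sum f (A - {m}) \<le> sum f ({..<m} \<union> {m<..M})"
    by (intro sum_mono2) auto
  also have "\<dots> = sum f {..<m} + sum f {m<..M}"
    by (rule sum.union_disjoint) auto
  also have "sum f {..<m} = (\<Sum>k=1..m. gap lam (int m) * gap lam (int m - int k) / (lam (int m) - lam (int m - int k))^2)"
    by (rule sum.reindex_bij_witness[where i = "\<lambda>k. m - k" and j = "\<lambda>n. m - n"])
      (auto simp: f_def of_nat_diff)
  also have "\<dots> \<le> pi^2 / 6"
    using assms(1) by (rule gap_weighted_left_sum_le)
  also have "sum f {m<..M} = (\<Sum>k=1..M - m. gap lam (int m) * gap lam (int m + int k) / (lam (int m + int k) - lam (int m))^2)"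
    by (rule sum.reindex_bij_witness[where i = "\<lambda>k. m + k" and j = "\<lambda>n. n - m"])
      (auto simp: f_def power2_commute)
  also have "\<dots> \<le> pi^2 / 6"
    using assms(1) by (rule gap_weighted_right_sum_le)
  finally show ?thesis
    by (simp add: f_def[abs_def])
qed

lemma admissible_const_one_pi_sq_div_3: "admissible_const 1 (pi^2 / 3)"
  unfolding admissible_const_def
proof (intro allI impI)
  fix N :: nat and lam :: "int \<Rightarrow> real" and t :: "nat \<Rightarrow> real"
  assume lam: "strict_mono lam"
  define K where "K m n = gap lam (int m) * gap lam (int n) / (lam (int m) - lam (int n))^2" for m n :: nat
  have "(\<Sum>m\<in>{1..N}. \<Sum>n\<in>{1..N} - {m}.
          gap lam (int m) powr (2 - 1) * gap lam (int n) powr 1 * t m * t n / (lam (int m) - lam (int n))^2)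
      = (\<Sum>m\<in>{1..N}. \<Sum>n\<in>{1..N} - {m}. K m n * t m * t n)"
    using gap_pos[OF lam] by (intro sum.cong refl) (simp add: K_def less_imp_le)
  also have "\<dots> \<le> pi^2 / 3 * (\<Sum>n\<in>{1..N}. (t n)^2)"
  proof (rule schur_test_offdiag)
    show "K m n = K n m" for m n
      by (simp add: K_def power2_commute mult.commute)
    show "0 \<le> K m n" for m n
      using gap_pos[OF lam] by (simp add: K_def less_imp_le)
    show "(\<Sum>n\<in>{1..N} - {m}. K m n) \<le> pi^2 / 3" for m
      unfolding K_def using lam by (rule gap_weighted_row_sum_le) simp
  qed simp
  finally show "(\<Sum>m\<in>{1..N}. \<Sum>n\<in>{1..N} - {m}.
          gap lam (int m) powr (2 - 1) * gap lam (int n) powr 1 * t m * t n / (lam (int m) - lam (int n))^2)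
      \<le> pi^2 / 3 * (\<Sum>n\<in>{1..N}. (t n)^2)" .
qed

lemma inv_sq_row_sum_ge:
  assumes "K < m" "m + K \<le> N"
  shows "2 * (\<Sum>i<K. 1 / (real i + 1)^2) \<le> (\<Sum>n\<in>{1..N} - {m}. 1 / (real m - real n)^2)"
proof -
  define f where "f n = 1 / (real m - real n)^2" for n :: nat
  have right: "(\<Sum>i<K. 1 / (real i + 1)^2) = sum f {m<..m + K}"
    by (rule sum.reindex_bij_witness[where i = "\<lambda>n. n - m - 1" and j = "\<lambda>i. m + i + 1"])
      (auto simp: f_def power2_eq_square algebra_simps)
  have left: "(\<Sum>i<K. 1 / (real i + 1)^2) = sum f {m - K..<m}"
    using assms(1)
    by (intro sum.reindex_bij_witness[where i = "\<lambda>n. m - n - 1" and j = "\<lambda>i. m - i - 1"])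
      (auto simp: f_def of_nat_diff)
  have "2 * (\<Sum>i<K. 1 / (real i + 1)^2) = sum f ({m - K..<m} \<union> {m<..m + K})"
    by (subst sum.union_disjoint) (auto simp: left[symmetric] right[symmetric])
  also have "\<dots> \<le> sum f ({1..N} - {m})"
    using assms by (intro sum_mono2) (auto simp: f_def)
  finally show ?thesis
    by (simp add: f_def)
qed

lemma admissible_const_one_ge_partial_sum:
  assumes "admissible_const 1 C"
  shows "2 * (\<Sum>i<K. 1 / (real i + 1)^2) \<le> C"
proof -
  define H where "H = (\<Sum>i<K. 1 / (real i + 1)^2)"
  have "(1 - 2 * real K / real N) * (2 * H) \<le> C" if "2 * K < N" for N
  proof -
    have "gap real_of_int k = 1" for k
      by (simp add: gap_def)
    moreover have "strict_mono real_of_int"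
      by (simp add: strict_mono_def)
    ultimately have total: "(\<Sum>m\<in>{1..N}. \<Sum>n\<in>{1..N} - {m}. 1 / (real m - real n)^2) \<le> C * real N"
      using assms[unfolded admissible_const_def, rule_format, of N real_of_int "\<lambda>_. 1"] that
      by simp
    have "real (N - 2 * K) * (2 * H) = (\<Sum>m\<in>{K<..N - K}. 2 * H)"
      using that by simp
    also have "\<dots> \<le> (\<Sum>m\<in>{K<..N - K}. \<Sum>n\<in>{1..N} - {m}. 1 / (real m - real n)^2)"
      unfolding H_def by (intro sum_mono inv_sq_row_sum_ge) auto
    also have "\<dots> \<le> (\<Sum>m\<in>{1..N}. \<Sum>n\<in>{1..N} - {m}. 1 / (real m - real n)^2)"
      by (intro sum_mono2 sum_nonneg) auto
    finally have "(real N - 2 * real K) * (2 * H) \<le> C * real N"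
      using that total by (simp add: of_nat_diff)
    then show ?thesis
      using that by (simp add: field_simps)
  qed
  moreover have "(\<lambda>N. (1 - 2 * real K / real N) * (2 * H)) \<longlonglongrightarrow> (1 - 0) * (2 * H)"
    by (intro tendsto_intros)
  ultimately show ?thesis
    unfolding H_def by (intro LIMSEQ_le_const2[where a = C]) (auto intro!: exI[of _ "Suc (2 * K)"])
qed

lemma admissible_const_one_imp_ge:
  assumes "admissible_const 1 C"
  shows "pi^2 / 3 \<le> C"
proof -
  have "(\<lambda>K. \<Sum>i<K. 1 / (real i + 1)^2) \<longlonglongrightarrow> pi^2 / 6"
    using inverse_squares_sums by (simp add: sums_def add.commute)
  then have "(\<lambda>K. 2 * (\<Sum>i<K. 1 / (real i + 1)^2)) \<longlonglongrightarrow> 2 * (pi^2 / 6)"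
    by (rule tendsto_mult_left)
  then have "2 * (pi^2 / 6) \<le> C"
    using admissible_const_one_ge_partial_sum[OF assms] by (intro LIMSEQ_le_const2) auto
  then show ?thesis
    by simp
qed

theorem theorem4:
  shows "Cbar 1 = ereal (pi^2 / 3)"
  unfolding Cbar_def
proof (rule antisym)
  show "Inf (ereal ` {C. admissible_const 1 C}) \<le> ereal (pi^2 / 3)"
    using admissible_const_one_pi_sq_div_3 by (intro Inf_lower imageI) simp
  show "ereal (pi^2 / 3) \<le> Inf (ereal ` {C. admissible_const 1 C})"
    using admissible_const_one_imp_ge by (intro Inf_greatest) auto
qed

end
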